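(* Let $\mathbf{H}$ be a finite commutative semihypergroup with states $e_1,\dots,e_n$ that is derived from a group. Then there exist an abelian group $G$ of order $n$ and an enumeration $G=\{g_1,\dots,g_n\}$ such that every matrix $A_i$ ($i=1,\dots,n$) is a linear combination of the matrices $G_1,\dots,G_n$ of the regular representation of $G$, where $G_l$ is the $n\times n$ permutation matrix with $(k,j)$ entry equal to $1$ if $g_l g_j=g_k$ and $0$ otherwise.
   Context: A finite commutative semihypergroup $\mathbf{H}$ with $n$ states $e_1,\dots,e_n$ is given by a convolution $e_i*e_j=\sum_{k=1}^n a_{i,j}(k)e_k$ ($i,j=1,\dots,n$), extended bilinearly, where $a_{i,j}(k)\ge 0$, $\sum_{k=1}^n a_{i,j}(k)=1$ for all $i,j$, the convolution is associative and commutative ($a_{i,j}(k)=a_{j,i}(k)$). Let $a_{i,j}\in\mathbb{R}^n$ denote the column vector $(a_{i,j}(1),\dots,a_{i,j}(n))^T$; let $A_i$ be the $n\times n$ matrix with columns $a_{i,1},\dots,a_{i,n}$ (so its $(k,j)$ entry is $a_{i,j}(k)$) and $B_i$ the matrix with columns $a_{1,i},\dots,a_{n,i}$. $\mathbf{H}$ is called derived from a group if it satisfies condition (A): the set $\{a_{i,j}: 1\le i,j\le n\}$ contains exactly $n$ distinct vectors, and for each $i$ the columns of $A_i$ are linearly independent and the columns of $B_i$ are linearly independent. *)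

theory Defs
  imports "HOL-Analysis.Analysis" "HOL-Algebra.Group"
begin

text \<open>States are indexed by a finite type 'n (so n = CARD('n)).
  The structure constants are a i j k = a_{i,j}(k), the coefficient of e_k in e_i * e_j.\<close>

definition comm_semihypergroup :: "('n::finite \<Rightarrow> 'n \<Rightarrow> 'n \<Rightarrow> real) \<Rightarrow> bool" where
  "comm_semihypergroup a \<longleftrightarrow>
     (\<forall>i j k. a i j k \<ge> 0) \<and>
     (\<forall>i j. (\<Sum>k\<in>UNIV. a i j k) = 1) \<and>
     (\<forall>i j k. a i j k = a j i k) \<and>
     (\<forall>i j m p. (\<Sum>k\<in>UNIV. a i j k * a k m p) = (\<Sum>k\<in>UNIV. a j m k * a i k p))"

definition svec :: "('n::finite \<Rightarrow> 'n \<Rightarrow> 'n \<Rightarrow> real) \<Rightarrow> 'n \<Rightarrow> 'n \<Rightarrow> real ^ 'n" where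
  "svec a i j = (\<chi> k. a i j k)"

definition lin_indep_family :: "('n::finite \<Rightarrow> real ^ 'm) \<Rightarrow> bool" where
  "lin_indep_family v \<longleftrightarrow> (\<forall>c. (\<Sum>j\<in>UNIV. c j *\<^sub>R v j) = 0 \<longrightarrow> (\<forall>j. c j = 0))"

definition derived_from_group :: "('n::finite \<Rightarrow> 'n \<Rightarrow> 'n \<Rightarrow> real) \<Rightarrow> bool" where
  "derived_from_group a \<longleftrightarrow>
     card {svec a i j | i j. True} = CARD('n) \<and>
     (\<forall>i. lin_indep_family (\<lambda>j. svec a i j)) \<and>
     (\<forall>i. lin_indep_family (\<lambda>j. svec a j i))"

definition Amat :: "('n::finite \<Rightarrow> 'n \<Rightarrow> 'n \<Rightarrow> real) \<Rightarrow> 'n \<Rightarrow> real ^ 'n ^ 'n" where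
  "Amat a i = (\<chi> k j. a i j k)"

definition regmat :: "('b, 'c) monoid_scheme \<Rightarrow> ('n::finite \<Rightarrow> 'b) \<Rightarrow> 'n \<Rightarrow> real ^ 'n ^ 'n" where
  "regmat G g l = (\<chi> k j. if g l \<otimes>\<^bsub>G\<^esub> g j = g k then 1 else 0)"

end

theory Submission
  imports Defs
begin

text \<open>Read the convolution as a commutative associative product \<open>*\<close> on \<open>\<real>\<^sup>n\<close>; the matrix
  \<open>A_i\<close> is multiplication by \<open>e_i\<close>. Condition (A) makes every \<open>A_i\<close> injective and forces each
  row \<open>e_i * e_1, ..., e_i * e_n\<close> to run through all \<open>n\<close> distinct products. Fixing a base state
  \<open>e\<close>, every product \<open>e_i * e_j\<close> is therefore \<open>e * e_m\<close> for a unique \<open>m =: i \<cdot> j\<close>, and cancelling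
  \<open>e\<close> transfers associativity and commutativity from \<open>*\<close> to \<open>\<cdot>\<close>, which becomes an abelian group
  with neutral element \<open>e\<close>. Cancelling \<open>e\<close> in \<open>e * (e * e_m) = (e * e) * e_m\<close> gives
  \<open>e * e_m = \<Sum>k. a_{e,e}(k) e_{k \<cdot> m}\<close>, hence \<open>A_i = \<Sum>k. a_{e,e}(k) G_{k \<cdot> i}\<close>.\<close>

lemma Amat_mult_axis: "Amat a i *v axis j 1 = svec a i j"
  by (simp add: matrix_vector_mult_basis column_def Amat_def svec_def)

lemma Amat_mult_eq_sum: "Amat a i *v x = (\<Sum>j\<in>UNIV. x $ j *\<^sub>R svec a i j)"
  by (simp add: vec_eq_iff matrix_vector_mult_def Amat_def svec_def sum_component mult.commute)

lemma inj_Amat_mult: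
  assumes "lin_indep_family (svec a i)"
  shows "inj ((*v) (Amat a i))"
proof -
  have "x = 0" if "Amat a i *v x = 0" for x
    using assms that unfolding lin_indep_family_def Amat_mult_eq_sum by (simp add: vec_eq_iff)
  then show ?thesis
    using linear_injective_0[OF matrix_vector_mul_linear] by blast
qed

lemma Amat_mult_svec:
  assumes "comm_semihypergroup a"
  shows "Amat a i *v svec a j m = (\<Sum>k\<in>UNIV. a i j k *\<^sub>R svec a k m)"
proof -
  have "(\<Sum>k\<in>UNIV. a j m k * a i k p) = (\<Sum>k\<in>UNIV. a i j k * a k m p)" for p
    using assms unfolding comm_semihypergroup_def by metis
  then show ?thesis
    by (simp add: vec_eq_iff Amat_mult_eq_sum svec_def sum_component)
qed

lemma inj_svec:
  fixes a :: "'n::finite \<Rightarrow> 'n \<Rightarrow> 'n \<Rightarrow> real"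
  assumes "lin_indep_family (svec a i)"
  shows "inj (svec a i)"
proof -
  have "svec a i = (*v) (Amat a i) \<circ> (\<lambda>j. axis j 1)"
    by (simp add: fun_eq_iff Amat_mult_axis)
  moreover have "inj (\<lambda>j::'n. axis j (1::real))"
    by (simp add: inj_def axis_eq_axis)
  ultimately show ?thesis
    using inj_compose inj_Amat_mult[OF assms] by metis
qed

lemma range_svec:
  assumes "derived_from_group a"
  shows "range (svec a i) = {svec a i j | i j. True}"
proof (rule card_subset_eq)
  have "{svec a i j | i j. True} = (\<lambda>(i, j). svec a i j) ` UNIV" by auto
  then show "finite {svec a i j | i j. True}" by simp
  show "range (svec a i) \<subseteq> {svec a i j | i j. True}" by auto
  have "inj (svec a i)"
    using assms unfolding derived_from_group_def by (blast intro: inj_svec)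
  then show "card (range (svec a i)) = card {svec a i j | i j. True}"
    using assms by (simp add: card_image derived_from_group_def)
qed

locale derived_semihypergroup =
  fixes a :: "'n::finite \<Rightarrow> 'n \<Rightarrow> 'n \<Rightarrow> real"
    and e :: 'n
  assumes comm_semihypergroup: "comm_semihypergroup a"
    and derived_from_group: "derived_from_group a"
begin

definition op :: "'n \<Rightarrow> 'n \<Rightarrow> 'n"
  where "op i j = (THE m. svec a e m = svec a i j)"

lemma a_commute: "a i j = a j i"
  using comm_semihypergroup by (simp add: comm_semihypergroup_def fun_eq_iff)

lemma svec_commute: "svec a i j = svec a j i"
  by (simp add: svec_def a_commute)

lemma inj_Amat_mult_base: "inj ((*v) (Amat a e))"
  using derived_from_group by (simp add: derived_from_group_def inj_Amat_mult)

lemma inj_svec_base: "inj (svec a e)"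
  using derived_from_group by (simp add: derived_from_group_def inj_svec)

lemma ex1_op: "\<exists>!m. svec a e m = svec a i j"
proof -
  have "svec a i j \<in> range (svec a e)"
    using range_svec[OF derived_from_group, of e] by blast
  then show ?thesis
    using inj_svec_base by (metis imageE injD)
qed

lemma svec_op: "svec a e (op i j) = svec a i j"
  unfolding op_def by (rule theI'[OF ex1_op])

lemma op_eqI: "svec a e m = svec a i j \<Longrightarrow> op i j = m"
  unfolding op_def by (rule the1_equality[OF ex1_op])

lemma op_commute: "op i j = op j i"
  by (simp add: op_def svec_commute)

lemma op_left_neutral: "op e j = j"
  by (rule op_eqI) simp

lemma op_left_inverse: "\<exists>j. op j i = e"
proof -
  have "svec a e e \<in> range (svec a i)"
    using range_svec[OF derived_from_group, of i] by blast
  then obtain j where "svec a i j = svec a e e"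
    by (metis rangeE)
  then show ?thesis
    by (metis op_commute op_eqI)
qed

lemma Amat_mult_svec_op:
  "Amat a e *v svec a (op i j) m = Amat a i *v svec a j m"
proof -
  have "a e (op i j) k = a i j k" for k
    using svec_op[of i j] by (simp add: svec_def vec_eq_iff)
  then show ?thesis
    by (simp add: Amat_mult_svec[OF comm_semihypergroup])
qed

lemma Amat_mult_svec_left_commute: "Amat a i *v svec a j m = Amat a j *v svec a i m"
  by (simp add: Amat_mult_svec[OF comm_semihypergroup] a_commute[of j i])

lemma op_assoc: "op (op i j) m = op i (op j m)"
proof -
  have "Amat a e *v svec a e (op (op i j) m) = Amat a i *v svec a j m"
    by (simp add: svec_op Amat_mult_svec_op)
  also have "\<dots> = Amat a j *v svec a m i"
    by (simp add: Amat_mult_svec_left_commute svec_commute[of m])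
  also have "\<dots> = Amat a e *v svec a e (op i (op j m))"
    by (simp add: svec_op svec_commute[of i] Amat_mult_svec_op)
  finally show ?thesis
    using inj_Amat_mult_base inj_svec_base by (simp add: injD)
qed

lemma svec_base_eq: "svec a e m = (\<Sum>k\<in>UNIV. a e e k *\<^sub>R axis (op k m) 1)"
proof -
  have "Amat a e *v svec a e m = (\<Sum>k\<in>UNIV. a e e k *\<^sub>R svec a k m)"
    by (rule Amat_mult_svec[OF comm_semihypergroup])
  also have "\<dots> = (\<Sum>k\<in>UNIV. a e e k *\<^sub>R (Amat a e *v axis (op k m) 1))"
    by (simp add: Amat_mult_axis svec_op)
  also have "\<dots> = Amat a e *v (\<Sum>k\<in>UNIV. a e e k *\<^sub>R axis (op k m) 1)"
    by (simp add: linear_sum[OF matrix_vector_mul_linear] linear_scale[OF matrix_vector_mul_linear])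
  finally show ?thesis
    using inj_Amat_mult_base by (simp add: injD)
qed

lemma structure_constant_eq:
  "a i j p = (\<Sum>k\<in>UNIV. a e e k * (if op k (op i j) = p then 1 else 0))"
proof -
  have "a i j p = svec a e (op i j) $ p"
    by (simp only: svec_op) (simp add: svec_def)
  then show ?thesis
    by (simp add: svec_base_eq sum_component axis_def eq_commute)
qed

lemma Amat_eq_sum_regmat:
  assumes "inj g" and "\<And>x y. g x \<otimes>\<^bsub>G\<^esub> g y = g (op x y)"
  shows "Amat a i = (\<Sum>l\<in>UNIV. (\<Sum>k | op k i = l. a e e k) *\<^sub>R regmat G g l)"
proof -
  have regmat: "regmat G g l = (\<chi> p j. if op l j = p then 1 else 0)" for l
    using assms by (simp add: regmat_def inj_eq)
  have "(\<Sum>l\<in>UNIV. (\<Sum>k | op k i = l. a e e k) *\<^sub>R regmat G g l)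
      = (\<Sum>l\<in>UNIV. \<Sum>k | op k i = l. a e e k *\<^sub>R regmat G g (op k i))"
    by (auto simp: scaleR_sum_left intro!: sum.cong)
  also have "\<dots> = (\<Sum>k\<in>UNIV. a e e k *\<^sub>R regmat G g (op k i))"
    using sum.group[of UNIV UNIV "\<lambda>k. op k i" "\<lambda>k. a e e k *\<^sub>R regmat G g (op k i)"] by simp
  also have "\<dots> = Amat a i"
    by (simp add: vec_eq_iff regmat Amat_def sum_component op_assoc structure_constant_eq[of i])
  finally show ?thesis ..
qed

end

definition induced_monoid :: "('a \<Rightarrow> 'b) \<Rightarrow> ('a \<Rightarrow> 'a \<Rightarrow> 'a) \<Rightarrow> 'a \<Rightarrow> 'b monoid"
  where "induced_monoid g f e =
    \<lparr>carrier = range g, mult = \<lambda>x y. g (f (inv_into UNIV g x) (inv_into UNIV g y)), one = g e\<rparr>"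

lemma induced_monoid_mult:
  "inj g \<Longrightarrow> g x \<otimes>\<^bsub>induced_monoid g f e\<^esub> g y = g (f x y)"
  by (simp add: induced_monoid_def)

lemma comm_group_induced_monoid:
  assumes "inj g"
    and "\<And>x y z. f (f x y) z = f x (f y z)"
    and "\<And>x y. f x y = f y x"
    and "\<And>x. f e x = x"
    and left_inverse: "\<And>x. \<exists>y. f y x = e"
  shows "comm_group (induced_monoid g f e)"
proof (rule comm_groupI)
  fix x assume "x \<in> carrier (induced_monoid g f e)"
  then obtain k where k: "x = g k"
    by (auto simp: induced_monoid_def)
  obtain j where "f j k = e"
    using left_inverse by blast
  with \<open>inj g\<close> show "\<exists>y\<in>carrier (induced_monoid g f e).
      y \<otimes>\<^bsub>induced_monoid g f e\<^esub> x = \<one>\<^bsub>induced_monoid g f e\<^esub>"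
    by (intro bexI[of _ "g j"]) (auto simp: induced_monoid_def k)
qed (use assms in \<open>auto simp: induced_monoid_def\<close>)

theorem corollary4:
  fixes a :: "'n::finite \<Rightarrow> 'n \<Rightarrow> 'n \<Rightarrow> real"
  assumes "comm_semihypergroup a"
    and "derived_from_group a"
  shows "\<exists>(G :: nat monoid) (g :: 'n \<Rightarrow> nat).
           comm_group G \<and> card (carrier G) = CARD('n) \<and>
           bij_betw g UNIV (carrier G) \<and>
           (\<forall>i. \<exists>c :: 'n \<Rightarrow> real. Amat a i = (\<Sum>l\<in>UNIV. c l *\<^sub>R regmat G g l))"
proof -
  fix e :: 'n \<comment> \<open>any state serves as the neutral element\<close>
  interpret derived_semihypergroup a e
    using assms by unfold_locales
  obtain g :: "'n \<Rightarrow> nat" where "inj g"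
    using finite_imp_inj_to_nat_seg[of "UNIV :: 'n set"] by auto
  define G where "G = induced_monoid g op e"
  have "comm_group G"
    unfolding G_def using \<open>inj g\<close>
    by (rule comm_group_induced_monoid)
      (auto intro: op_assoc op_commute op_left_neutral op_left_inverse)
  moreover have bij: "bij_betw g UNIV (carrier G)"
    using \<open>inj g\<close> by (simp add: G_def induced_monoid_def bij_betw_def)
  moreover have "card (carrier G) = CARD('n)"
    using bij_betw_same_card[OF bij] by simp
  moreover have "\<exists>c. Amat a i = (\<Sum>l\<in>UNIV. c l *\<^sub>R regmat G g l)" for i
    using \<open>inj g\<close> by (intro exI, rule Amat_eq_sum_regmat)
      (simp add: G_def induced_monoid_mult[OF \<open>inj g\<close>])
  ultimately show ?thesis
    by blast
qed

end
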